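(* Let $\xi,\eta$ be real with $1,\xi,\eta$ linearly independent over $\mathbb{Q}$, $\mathbf{u}=(1,\xi,\eta)$, and take $\mathcal{N}(\mathbf{x})=\|\mathbf{x}\|$, $\Delta(\mathbf{x})=\|\mathbf{u}\wedge\mathbf{x}\|$. For every $\alpha$ with $0\le\alpha<\limsup_{q\to\infty}(-L_1^*(q))/q$, setting $\mu=\alpha/(1-\alpha)$, one has $$\kappa_\alpha(-L_1^* )=\frac{\widehat{\nu}_\mu(\xi,\eta)}{1+\widehat{\nu}_\mu(\xi,\eta)}.$$
   Context: $\|\cdot\|$ is the Euclidean norm, $\wedge$ the cross product on $\mathbb{R}^3$. $L_1^*(q)$ is the logarithm of the first successive minimum, with respect to $\mathbb{Z}^3$, of the convex body $\{\mathbf{x}\in\mathbb{R}^3:\|\mathbf{x}\|\le e^q,\ \|\mathbf{x}\wedge\mathbf{u}\|\le1\}$; $-L_1^*$ is continuous piecewise linear with slopes $0,1$. For an unbounded continuous piecewise linear $P$ with slopes $0,1$ changing from slope $1$ to $0$ infinitely often: $(q_i)$ is the increasing sequence of abscissas where the slope changes from $1$ to $0$; for $\alpha<\limsup_q P(q)/q$, $(q_{i,\alpha})_i$ is the increasing subsequence of the $q_k$ with $P(q_k)/q_k\ge\alpha$, $r_{i,\alpha}=q_{i+1,\alpha}-P(q_{i+1,\alpha})+P(q_{i,\alpha})$, and $\kappa_\alpha(P)=\liminf_i P(q_{i,\alpha})/r_{i,\alpha}$. For $\mu\ge0$ less than $\lambda(\xi,\eta)$ (the supremum of $\lambda>0$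 such that $1\le|x_0|\le X$, $\max(|x_0\xi-x_1|,|x_0\eta-x_2|)\le X^{-\lambda}$ has a solution in $\mathbb{Z}^3\setminus\{0\}$ for arbitrarily large $X$), $\widehat{\nu}_\mu(\xi,\eta)$ is the supremum of real $\nu$ such that $\mathcal{N}(\mathbf{x})\le X$, $\Delta(\mathbf{x})\le\min(X^{-\nu},\mathcal{N}(\mathbf{x})^{-\mu})$ has a solution $\mathbf{x}\in\mathbb{Z}^3\setminus\{0\}$ for every sufficiently large $X$. *)

theory Defs
  imports "HOL-Analysis.Analysis"
begin

definition int_point :: "real^3 \<Rightarrow> bool" where
  "int_point x \<longleftrightarrow> (\<forall>i. x $ i \<in> \<int>)"

text \<open>L_1^*(q): logarithm of the first successive minimum, with respect to Z^3, of the
 convex body {x : norm x \<le> e^q, norm (x \<and> u) \<le> 1}.\<close>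
definition L1star :: "real^3 \<Rightarrow> real \<Rightarrow> real" where
  "L1star u q = ln (Inf {lam. lam > 0 \<and> (\<exists>x. int_point x \<and> x \<noteq> 0 \<and>
      norm x \<le> lam * exp q \<and> norm (cross3 x u) \<le> lam)})"

definition slope_change_10 :: "(real \<Rightarrow> real) \<Rightarrow> real set" where
  "slope_change_10 P = {q. \<exists>e>0. (\<forall>t\<in>{q-e..q}. P t = P q - (q - t)) \<and>
                                 (\<forall>t\<in>{q..q+e}. P t = P q)}"

text \<open>Increasing enumeration of a (discrete, bounded below) set of reals.\<close>
primrec enum_real :: "real set \<Rightarrow> nat \<Rightarrow> real" where
  "enum_real S 0 = Inf S"
| "enum_real S (Suc i) = Inf {t \<in> S. t > enum_real S i}"

definition q_alpha :: "(real \<Rightarrow> real) \<Rightarrow> real \<Rightarrow> nat \<Rightarrow> real" where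
  "q_alpha P \<alpha> = enum_real {q \<in> slope_change_10 P. P q / q \<ge> \<alpha>}"

definition r_alpha :: "(real \<Rightarrow> real) \<Rightarrow> real \<Rightarrow> nat \<Rightarrow> real" where
  "r_alpha P \<alpha> i = q_alpha P \<alpha> (Suc i) - P (q_alpha P \<alpha> (Suc i)) + P (q_alpha P \<alpha> i)"

definition kappa :: "real \<Rightarrow> (real \<Rightarrow> real) \<Rightarrow> ereal" where
  "kappa \<alpha> P = Liminf sequentially (\<lambda>i. ereal (P (q_alpha P \<alpha> i) / r_alpha P \<alpha> i))"

definition nu_hat :: "real \<Rightarrow> real^3 \<Rightarrow> real" where
  "nu_hat \<mu> u = Sup {\<nu>. \<exists>X0. \<forall>X\<ge>X0. \<exists>x. int_point x \<and> x \<noteq> 0 \<and> norm x \<le> X \<and>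
        norm (cross3 u x) \<le> min (X powr (-\<nu>)) (norm x powr (-\<mu>))}"

end

theory Submission
  imports Defs
begin

text \<open>The function \<open>P = - L1star u\<close> is the upper envelope of the trajectories \<open>traj x\<close> of the
  nonzero integer points; each trajectory rises with slope 1 up to its kink and is constant
  afterwards. The corners of \<open>P\<close> where the slope drops from 1 to 0 are exactly the kinks of the
  minimal points (no integer point beats them in both norm and \<open>Delta\<close>), and at such a corner the
  condition \<open>alpha \<le> P q / q\<close> reads \<open>Delta x \<le> norm x powr (- mu)\<close>. Enumerating these corners by
  points \<open>x\<^sub>0, x\<^sub>1, \<dots>\<close> and writing \<open>Delta x\<^sub>i = norm x\<^sub>i\<^sub>+\<^sub>1 powr (- nu i)\<close>, the ratio
  \<open>P q\<^sub>i / r\<^sub>i\<close> is \<open>nu i / (1 + nu i)\<close>. Between the norms of \<open>x\<^sub>i\<close> and \<open>x\<^sub>i\<^sub>+\<^sub>1\<close> no point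
  satisfying the \<open>mu\<close>-condition does better than \<open>x\<^sub>i\<close>, so the uniform exponent is the lower
  limit of \<open>nu\<close>, and the determinant bound \<open>1 \<le> norm (x\<^sub>i \<times> x\<^sub>i\<^sub>+\<^sub>1)\<close> keeps \<open>nu\<close> bounded.\<close>

lemma int_point_norm_ge1:
  assumes "int_point x" "x \<noteq> 0"
  shows "norm x \<ge> 1"
proof -
  obtain i where i: "x $ i \<noteq> 0"
    using assms(2) by (metis vec_eq_iff zero_index)
  have "x $ i \<in> \<int>"
    using assms(1) by (simp add: int_point_def)
  then have "\<bar>x $ i\<bar> \<ge> 1"
    using i Ints_nonzero_abs_ge1 by blast
  then show ?thesis
    using component_le_norm_cart[of x i] by linarith
qed

lemma int_point_cross3: "int_point x \<Longrightarrow> int_point y \<Longrightarrow> int_point (cross3 x y)"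
  by (simp add: int_point_def forall_3 cross_components)

lemma finite_int_points_norm_le: "finite {x::real^3. int_point x \<and> norm x \<le> R}"
proof -
  define n where "n = \<lceil>R\<rceil>"
  let ?box = "(\<lambda>(a,b,c). vector [of_int a, of_int b, of_int c]) ` ({-n..n} \<times> {-n..n} \<times> {-n..n})"
  have "{x::real^3. int_point x \<and> norm x \<le> R} \<subseteq> ?box"
  proof
    fix x :: "real^3"
    assume x: "x \<in> {x. int_point x \<and> norm x \<le> R}"
    have coord: "\<exists>m. x $ i = of_int m \<and> m \<in> {-n..n}" for i
    proof -
      obtain m where m: "x $ i = of_int m"
        using x by (auto simp: int_point_def elim!: Ints_cases)
      have "\<bar>of_int m\<bar> \<le> R"
        using component_le_norm_cart[of x i] x m by auto
      then have "m \<in> {-n..n}"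
        unfolding n_def by (auto simp: abs_le_iff; linarith)
      with m show ?thesis by blast
    qed
    obtain a b c where "x $ 1 = of_int a" "x $ 2 = of_int b" "x $ 3 = of_int c"
      and "a \<in> {-n..n}" "b \<in> {-n..n}" "c \<in> {-n..n}"
      using coord by metis
    moreover from this have "x = vector [of_int a, of_int b, of_int c]"
      by (simp add: vec_eq_iff forall_3)
    ultimately show "x \<in> ?box"
      by (intro image_eqI[of _ _ "(a,b,c)"]) auto
  qed
  then show ?thesis
    by (rule finite_subset) auto
qed

lemma norm_cross3_le: "norm (cross3 x y) \<le> norm x * norm y"
proof -
  have "(norm (cross3 x y))\<^sup>2 \<le> (norm x * norm y)\<^sup>2"
    using norm_cross_dot[of x y] by (metis le_add_same_cancel1 zero_le_power2)
  then show ?thesis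
    by (simp add: power2_le_iff_abs_le)
qed

text \<open>Decompose \<open>y\<close> into a component \<open>y'\<close> orthogonal to \<open>u\<close> and a multiple \<open>s u\<close>; then
  \<open>\<parallel>y'\<parallel> \<parallel>u\<parallel> = \<parallel>y \<times> u\<parallel>\<close> and \<open>\<bar>s\<bar> \<parallel>u\<parallel> \<le> \<parallel>y\<parallel>\<close>.\<close>
lemma norm_cross3_le_via_direction:
  fixes x y u :: "real^3"
  shows "norm u * norm (cross3 x y) \<le> norm x * norm (cross3 y u) + norm y * norm (cross3 x u)"
proof (cases "u = 0")
  case False
  then have uu: "u \<bullet> u > 0" by simp
  define s where "s = (y \<bullet> u) / (u \<bullet> u)"
  define y' where "y' = y - s *\<^sub>R u"
  have "y' \<bullet> u = 0"
    using uu by (simp add: y'_def s_def inner_diff_left)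
  moreover have cross_y': "cross3 y' u = cross3 y u"
    by (simp add: y'_def Cross3.left_diff_distrib cross_mult_left)
  ultimately have "(norm (cross3 y u))\<^sup>2 = (norm y' * norm u)\<^sup>2"
    using norm_cross_dot[of y' u] by simp
  then have norm_y': "norm u * norm y' = norm (cross3 y u)"
    by (simp add: mult.commute)
  have "\<bar>s\<bar> * (norm u)\<^sup>2 = \<bar>y \<bullet> u\<bar>"
    using uu by (simp add: s_def abs_div power2_norm_eq_inner)
  also have "\<dots> \<le> norm y * norm u"
    by (rule Cauchy_Schwarz_ineq2)
  finally have s_bound: "norm u * \<bar>s\<bar> \<le> norm y"
    using False by (simp add: power2_eq_square mult.commute mult.left_commute)
  have "cross3 x y = cross3 x y' + s *\<^sub>R cross3 x u"
    by (simp add: y'_def Cross3.right_diff_distrib cross_mult_right)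
  then have "norm (cross3 x y) \<le> norm (cross3 x y') + \<bar>s\<bar> * norm (cross3 x u)"
    by (metis norm_scaleR norm_triangle_ineq)
  also have "\<dots> \<le> norm x * norm y' + \<bar>s\<bar> * norm (cross3 x u)"
    using norm_cross3_le by simp
  finally have "norm u * norm (cross3 x y)
      \<le> norm x * (norm u * norm y') + (norm u * \<bar>s\<bar>) * norm (cross3 x u)"
    using mult_left_mono[OF _ norm_ge_zero, of _ _ u] by (fastforce simp: algebra_simps)
  also have "\<dots> \<le> norm x * norm (cross3 y u) + norm y * norm (cross3 x u)"
    using norm_y' s_bound by (simp add: mult_right_mono)
  finally show ?thesis .
qed simp

lemma Inf_locally_finite:
  fixes S T :: "real set"
  assumes lf: "\<And>b. finite {s\<in>S. s \<le> b}" and "T \<subseteq> S" "T \<noteq> {}"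
  shows "Inf T \<in> T \<and> (\<forall>t\<in>T. Inf T \<le> t)"
proof -
  obtain t0 where t0: "t0 \<in> T"
    using assms by auto
  define F where "F = {s\<in>T. s \<le> t0}"
  have "finite F"
    unfolding F_def using assms by (auto intro: finite_subset[OF _ lf[of t0]])
  moreover have "t0 \<in> F"
    using t0 by (simp add: F_def)
  ultimately have "Min F \<in> F"
    using Min_in by blast
  have "Min F \<le> t" if "t \<in> T" for t
  proof (cases "t \<le> t0")
    case True
    with that \<open>finite F\<close> show ?thesis by (simp add: F_def)
  next
    case False
    with \<open>Min F \<in> F\<close> show ?thesis by (simp add: F_def)
  qed
  moreover have "Min F \<in> T"
    using \<open>Min F \<in> F\<close> by (simp add: F_def)
  moreover from this calculation have "Inf T = Min F"
    by (intro cInf_eq_minimum)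
  ultimately show ?thesis
    by simp
qed

lemma
  fixes S :: "real set"
  assumes unbounded: "\<And>b. \<exists>s\<in>S. s > b" and lf: "\<And>b. finite {s\<in>S. s \<le> b}"
  shows enum_real_mem: "enum_real S i \<in> S"
    and enum_real_less: "enum_real S i < enum_real S (Suc i)"
    and enum_real_surj: "s \<in> S \<Longrightarrow> \<exists>i. enum_real S i = s"
proof -
  have Inf_above: "Inf {t \<in> S. t > a} \<in> S \<and> a < Inf {t \<in> S. t > a}
      \<and> (\<forall>t\<in>S. t > a \<longrightarrow> Inf {t \<in> S. t > a} \<le> t)" for a
    using Inf_locally_finite[OF lf, of "{t \<in> S. t > a}"] unbounded[of a] by auto
  have Inf_S: "Inf S \<in> S \<and> (\<forall>t\<in>S. Inf S \<le> t)"
    using Inf_locally_finite[OF lf, of S] unbounded by auto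
  have mem: "enum_real S i \<in> S" for i
    using Inf_S Inf_above by (cases i) auto
  have succ: "enum_real S i < enum_real S (Suc i)
      \<and> (\<forall>t\<in>S. t > enum_real S i \<longrightarrow> enum_real S (Suc i) \<le> t)" for i
    using Inf_above by simp
  show "enum_real S i \<in> S" "enum_real S i < enum_real S (Suc i)"
    using mem succ by auto
  assume s: "s \<in> S"
  have "strict_mono (enum_real S)"
    using succ by (simp add: strict_mono_Suc_iff)
  have "\<exists>i. s \<le> enum_real S i"
  proof (rule ccontr)
    assume "\<not> ?thesis"
    then have "range (enum_real S) \<subseteq> {t\<in>S. t \<le> s}"
      using mem by (auto simp: not_le less_imp_le)
    then have "finite (range (enum_real S))"
      using lf finite_subset by blast
    with \<open>strict_mono (enum_real S)\<close> show False
      using finite_imageD strict_mono_imp_inj_on by (metis infinite_UNIV_nat)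
  qed
  define n where "n = (LEAST i. s \<le> enum_real S i)"
  have s_le: "s \<le> enum_real S n"
    unfolding n_def using \<open>\<exists>i. s \<le> enum_real S i\<close> by (rule LeastI_ex)
  have "enum_real S n \<le> s"
  proof (cases n)
    case 0
    then show ?thesis using Inf_S s by simp
  next
    case (Suc m)
    then have "enum_real S m < s"
      using not_less_Least[of m "\<lambda>i. s \<le> enum_real S i"] by (simp add: n_def)
    then show ?thesis using succ[of m] s Suc by auto
  qed
  with s_le show "\<exists>i. enum_real S i = s"
    by (intro exI[of _ n]) simp
qed

lemma bracket_mono_unbounded:
  fixes f :: "nat \<Rightarrow> real"
  assumes "mono f" and unbounded: "\<And>X. \<exists>j. X < f j" and "f n \<le> X"
  shows "\<exists>i\<ge>n. f i \<le> X \<and> X < f (Suc i)"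
proof -
  define m where "m = (LEAST j. X < f j)"
  have "X < f m"
    unfolding m_def using unbounded by (rule LeastI_ex)
  moreover have "n < m"
    using \<open>mono f\<close> \<open>f n \<le> X\<close> \<open>X < f m\<close> by (metis leI le_less_trans monoD order.asym)
  moreover have "f (m - 1) \<le> X"
    using not_less_Least[of "m - 1" "\<lambda>j. X < f j"] \<open>n < m\<close> by (simp add: m_def)
  ultimately show ?thesis
    by (intro exI[of _ "m - 1"]) auto
qed

lemma le_powr_at_left_endpoint:
  fixes A B D \<nu> :: real
  assumes "0 < A" "A < B" and le: "\<And>X. A \<le> X \<Longrightarrow> X < B \<Longrightarrow> D \<le> X powr \<nu>"
  shows "D \<le> B powr \<nu>"
proof (rule tendsto_lowerbound)
  show "((\<lambda>X. X powr \<nu>) \<longlongrightarrow> B powr \<nu>) (at_left B)"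
    using assms by (intro tendsto_intros) auto
  show "\<forall>\<^sub>F X in at_left B. D \<le> X powr \<nu>"
    unfolding eventually_at_left_field using assms by (auto intro!: exI[of _ A])
qed simp

lemma
  fixes y t :: real
  assumes "0 \<le> y" "y < 1" "0 \<le> t"
  shows less_frac_one_plus_iff: "y < t / (1 + t) \<longleftrightarrow> y / (1 - y) < t"
    and le_frac_one_plus_iff: "y \<le> t / (1 + t) \<longleftrightarrow> y / (1 - y) \<le> t"
  using assms by (simp_all add: less_divide_eq le_divide_eq divide_less_eq divide_le_eq algebra_simps)

lemma Liminf_le_if_frequently_less:
  fixes X :: "_ \<Rightarrow> 'a::complete_linorder"
  assumes "\<exists>\<^sub>F x in F. X x < z"
  shows "Liminf F X \<le> z"
proof (rule ccontr)
  assume "\<not> ?thesis"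
  then have "\<forall>\<^sub>F x in F. z < X x"
    by (intro less_LiminfD) simp
  with assms have "\<exists>\<^sub>F x in F. z < X x \<and> X x < z"
    by (rule frequently_eventually_conj)
  then have "\<exists>\<^sub>F x in F. False"
    by (rule frequently_elim1) auto
  then show False
    by simp
qed

lemma Liminf_frac_one_plus:
  fixes t :: "nat \<Rightarrow> real"
  assumes nonneg: "\<forall>\<^sub>F i in sequentially. 0 \<le> t i"
    and bounded: "\<forall>\<^sub>F i in sequentially. t i \<le> C"
  defines "L \<equiv> Sup {v. \<forall>\<^sub>F i in sequentially. v \<le> t i}"
  shows "Liminf sequentially (\<lambda>i. ereal (t i / (1 + t i))) = ereal (L / (1 + L))"
proof -
  let ?V = "{v. \<forall>\<^sub>F i in sequentially. v \<le> t i}"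
  have "0 \<in> ?V"
    using nonneg by simp
  then have V_ne: "?V \<noteq> {}"
    by blast
  have bdd: "bdd_above ?V"
  proof
    fix v assume "v \<in> ?V"
    then have "\<forall>\<^sub>F i in sequentially. v \<le> t i \<and> t i \<le> C"
      using bounded by (simp add: eventually_conj_iff)
    then have "\<forall>\<^sub>F i in sequentially. v \<le> C"
      by (rule eventually_mono) linarith
    then show "v \<le> C"
      by simp
  qed
  have "0 \<le> L"
    unfolding L_def using \<open>0 \<in> ?V\<close> bdd by (rule cSup_upper)
  have frac_L: "0 \<le> L / (1 + L)" "L / (1 + L) < 1"
    using \<open>0 \<le> L\<close> by simp_all
  have below: "\<forall>\<^sub>F i in sequentially. y < t i" if y_less: "y < L" for y
  proof -
    obtain v where "v \<in> ?V" "y < v"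
      using y_less[unfolded L_def less_cSup_iff[OF V_ne bdd]] by blast
    from \<open>v \<in> ?V\<close> have "\<forall>\<^sub>F i in sequentially. v \<le> t i"
      by simp
    then show ?thesis
      by (rule eventually_mono) (use \<open>y < v\<close> in linarith)
  qed
  have above: "\<exists>\<^sub>F i in sequentially. t i < y" if "L < y" for y
  proof (rule ccontr)
    assume "\<not> ?thesis"
    then have "y \<in> ?V"
      by (simp add: not_frequently not_less)
    then have "y \<le> L"
      unfolding L_def using bdd by (rule cSup_upper)
    with that show False
      by simp
  qed
  show ?thesis
  proof (rule antisym)
    show "ereal (L / (1 + L)) \<le> Liminf sequentially (\<lambda>i. ereal (t i / (1 + t i)))"
      unfolding le_Liminf_iff
    proof (intro allI impI)
      fix y assume y: "y < ereal (L / (1 + L))"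
      show "\<forall>\<^sub>F i in sequentially. y < ereal (t i / (1 + t i))"
      proof (cases "y < 0")
        case True
        from nonneg show ?thesis
          by (rule eventually_mono) (use True in \<open>auto intro: less_le_trans\<close>)
      next
        case False
        then obtain y' where y': "y = ereal y'" "0 \<le> y'" "y' < L / (1 + L)"
          using y by (cases y) auto
        then have "y' < 1"
          using frac_L by linarith
        then have "y' / (1 - y') < L"
          using less_frac_one_plus_iff[OF \<open>0 \<le> y'\<close> _ \<open>0 \<le> L\<close>] y' by blast
        with below have "\<forall>\<^sub>F i in sequentially. y' / (1 - y') < t i \<and> 0 \<le> t i"
          using nonneg by (simp add: eventually_conj_iff)
        then show ?thesis
          by (rule eventually_mono) (use y' \<open>y' < 1\<close> less_frac_one_plus_iff in auto)
      qed
    qed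
    show "Liminf sequentially (\<lambda>i. ereal (t i / (1 + t i))) \<le> ereal (L / (1 + L))"
    proof (rule dense_ge)
      fix z assume z: "ereal (L / (1 + L)) < z"
      show "Liminf sequentially (\<lambda>i. ereal (t i / (1 + t i))) \<le> z"
      proof (rule Liminf_le_if_frequently_less)
        show "\<exists>\<^sub>F i in sequentially. ereal (t i / (1 + t i)) < z"
        proof (cases "z < 1")
          case True
          then obtain z' where z': "z = ereal z'" "L / (1 + L) < z'" "z' < 1"
            using z by (cases z) auto
          then have "0 \<le> z'"
            using frac_L by linarith
          have "L < z' / (1 - z')"
            using le_frac_one_plus_iff[OF \<open>0 \<le> z'\<close> \<open>z' < 1\<close> \<open>0 \<le> L\<close>] z' by linarith
          from frequently_eventually_conj[OF above[OF this] nonneg]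
          show ?thesis
            by (rule frequently_elim1)
              (use z' \<open>0 \<le> z'\<close> le_frac_one_plus_iff in \<open>auto simp: not_le[symmetric]\<close>)
        next
          case False
          then have "1 \<le> z"
            by simp
          from nonneg have "\<forall>\<^sub>F i in sequentially. ereal (t i / (1 + t i)) < 1"
            by (rule eventually_mono) simp
          then have "\<forall>\<^sub>F i in sequentially. ereal (t i / (1 + t i)) < z"
            by (rule eventually_mono) (rule less_le_trans[OF _ \<open>1 \<le> z\<close>])
          then show ?thesis
            by (rule eventually_frequently[rotated]) simp
        qed
      qed
    qed
  qed
qed

section \<open>The envelope of the trajectories\<close>

locale irrational_direction =
  fixes xi eta :: real
  assumes xi_irrational: "xi \<notin> \<rat>"
begin

definition u :: "real^3" where
  "u = vector [1, xi, eta]"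

definition Delta :: "real^3 \<Rightarrow> real" where
  "Delta x = norm (cross3 x u)"

definition Lat :: "(real^3) set" where
  "Lat = {x. int_point x \<and> x \<noteq> 0}"

definition traj :: "real^3 \<Rightarrow> real \<Rightarrow> real" where
  "traj x q = min (q - ln (norm x)) (- ln (Delta x))"

definition kink :: "real^3 \<Rightarrow> real" where
  "kink x = ln (norm x) - ln (Delta x)"

definition P :: "real \<Rightarrow> real" where
  "P q = - L1star u q"

text \<open>\<open>lam x q\<close> is the least \<open>\<lambda>\<close> such that \<open>x\<close> lies in \<open>\<lambda>\<close> times the convex body defining
  \<open>L1star u q\<close>.\<close>
definition lam :: "real^3 \<Rightarrow> real \<Rightarrow> real" where
  "lam x q = max (norm x / exp q) (Delta x)"

lemma norm_u_ge1: "norm u \<ge> 1"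
  using component_le_norm_cart[of u 1] by (simp add: u_def)

lemma Lat_norm_ge1: "x \<in> Lat \<Longrightarrow> norm x \<ge> 1"
  by (auto simp: Lat_def int_point_norm_ge1)

lemma Lat_norm_pos: "x \<in> Lat \<Longrightarrow> norm x > 0"
  using Lat_norm_ge1[of x] by linarith

lemma axis_in_Lat: "axis 1 1 \<in> Lat"
  by (auto simp: Lat_def int_point_def axis_def vec_eq_iff)

lemma finite_Lat_norm_le: "finite {y\<in>Lat. norm y \<le> R}"
  by (rule finite_subset[OF _ finite_int_points_norm_le[of R]]) (auto simp: Lat_def)

lemma Delta_pos:
  assumes "x \<in> Lat"
  shows "Delta x > 0"
proof (rule ccontr)
  assume "\<not> Delta x > 0"
  then have "cross3 x u = 0"
    by (simp add: Delta_def)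
  then have coords: "x $ 2 = x $ 1 * xi" "x $ 3 = x $ 1 * eta"
    by (auto simp: vec_eq_iff forall_3 cross_components u_def algebra_simps)
  have int: "x $ 1 \<in> \<int>" "x $ 2 \<in> \<int>" and "x \<noteq> 0"
    using assms by (auto simp: Lat_def int_point_def)
  have "x $ 1 = 0"
  proof (rule ccontr)
    assume "x $ 1 \<noteq> 0"
    then have "xi = x $ 2 / x $ 1"
      using coords by simp
    also have "\<dots> \<in> \<rat>"
      using int by (auto intro: Rats_divide Ints_subset_Rats[THEN subsetD])
    finally show False
      using xi_irrational by simp
  qed
  with coords \<open>x \<noteq> 0\<close> show False
    by (simp add: vec_eq_iff forall_3)
qed

lemma lam_pos: "x \<in> Lat \<Longrightarrow> lam x q > 0"
  using Delta_pos[of x] by (auto simp: lam_def)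

lemma traj_eq_neg_ln_lam:
  assumes "x \<in> Lat"
  shows "traj x q = - ln (lam x q)"
proof -
  have "ln (lam x q) = max (ln (norm x / exp q)) (ln (Delta x))"
    unfolding lam_def using Lat_norm_pos[OF assms] Delta_pos[OF assms] by (auto simp: max_def)
  also have "ln (norm x / exp q) = ln (norm x) - q"
    using Lat_norm_pos[OF assms] by (simp add: ln_div)
  finally show ?thesis
    by (simp add: traj_def min_def max_def)
qed

lemma lam_attains_min: "\<exists>x\<in>Lat. \<forall>y\<in>Lat. lam x q \<le> lam y q"
proof -
  define x0 :: "real^3" where "x0 = axis 1 1"
  define F where "F = {x\<in>Lat. norm x \<le> lam x0 q * exp q}"
  have "finite F"
    unfolding F_def by (rule finite_Lat_norm_le)
  have "norm x0 / exp q \<le> lam x0 q"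
    by (simp add: lam_def)
  then have "x0 \<in> F"
    using axis_in_Lat by (simp add: F_def x0_def divide_le_eq)
  define xm where "xm = arg_min_on (\<lambda>x. lam x q) F"
  have "F \<noteq> {}"
    using \<open>x0 \<in> F\<close> by blast
  then have xm: "xm \<in> F" "\<forall>y\<in>F. lam xm q \<le> lam y q"
    unfolding xm_def using \<open>finite F\<close> by (auto intro: arg_min_if_finite(1) arg_min_least)
  have "lam xm q \<le> lam y q" if "y \<in> Lat" for y
  proof (cases "y \<in> F")
    case False
    then have "lam x0 q < norm y / exp q"
      using that by (simp add: F_def field_simps)
    also have "\<dots> \<le> lam y q"
      by (simp add: lam_def)
    finally show ?thesis
      using xm \<open>x0 \<in> F\<close> by fastforce
  qed (use xm in auto)
  then show ?thesis
    using xm by (auto simp: F_def)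
qed

lemma P_attained: "\<exists>x\<in>Lat. P q = traj x q \<and> (\<forall>y\<in>Lat. traj y q \<le> P q)"
proof -
  obtain xm where xm: "xm \<in> Lat" "\<forall>y\<in>Lat. lam xm q \<le> lam y q"
    using lam_attains_min by blast
  define A where "A = {lam. lam > 0 \<and> (\<exists>x. int_point x \<and> x \<noteq> 0 \<and>
      norm x \<le> lam * exp q \<and> norm (cross3 x u) \<le> lam)}"
  have "lam xm q \<in> A"
    using xm lam_pos[OF xm(1)] by (auto simp: A_def Lat_def Delta_def lam_def field_simps)
  moreover have "lam xm q \<le> l" if "l \<in> A" for l
  proof -
    obtain y where y: "y \<in> Lat" "norm y \<le> l * exp q" "Delta y \<le> l"
      using \<open>l \<in> A\<close> by (auto simp: A_def Lat_def Delta_def)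
    then have "lam y q \<le> l"
      by (simp add: lam_def field_simps)
    with xm y(1) show ?thesis
      by fastforce
  qed
  ultimately have "Inf A = lam xm q"
    by (intro cInf_eq_minimum) auto
  then have P_eq: "P q = traj xm q"
    unfolding P_def L1star_def A_def[symmetric] using traj_eq_neg_ln_lam[OF xm(1)] by simp
  have "traj y q \<le> P q" if "y \<in> Lat" for y
    unfolding P_eq traj_eq_neg_ln_lam[OF that] traj_eq_neg_ln_lam[OF xm(1)]
    using xm that lam_pos[OF xm(1), of q] lam_pos[OF that, of q] by simp
  with xm(1) P_eq show ?thesis
    by blast
qed

lemma traj_le_P: "y \<in> Lat \<Longrightarrow> traj y q \<le> P q"
  using P_attained by blast

lemma P_le: "P q \<le> q"
proof -
  obtain x where "x \<in> Lat" "P q = traj x q"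
    using P_attained by blast
  moreover have "ln (norm x) \<ge> 0"
    using Lat_norm_ge1[OF \<open>x \<in> Lat\<close>] by simp
  ultimately show ?thesis
    by (simp add: traj_def)
qed

lemma traj_mono: "s \<le> t \<Longrightarrow> traj x s \<le> traj x t"
  by (simp add: traj_def min_def)

lemma P_mono:
  assumes "s \<le> t"
  shows "P s \<le> P t"
proof -
  obtain x where "x \<in> Lat" "P s = traj x s"
    using P_attained by blast
  then show ?thesis
    using traj_mono[OF assms, of x] traj_le_P[of x t] by linarith
qed

lemma traj_lipschitz: "\<bar>traj x s - traj x t\<bar> \<le> \<bar>s - t\<bar>"
  by (simp add: traj_def min_def abs_if)

lemma traj_below_kink: "t \<le> kink x \<Longrightarrow> traj x t = t - ln (norm x)"
  by (simp add: traj_def kink_def min_def)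

lemma traj_above_kink: "kink x \<le> t \<Longrightarrow> traj x t = - ln (Delta x)"
  by (simp add: traj_def kink_def min_def)

lemma traj_antimono:
  assumes "y \<in> Lat" "norm y \<le> norm x" "Delta y \<le> Delta x"
  shows "traj x q \<le> traj y q"
proof -
  have "0 < norm y" "0 < Delta y"
    using Lat_norm_pos[OF assms(1)] Delta_pos[OF assms(1)] by simp_all
  then have "ln (norm y) \<le> ln (norm x)" "ln (Delta y) \<le> ln (Delta x)"
    using assms(2,3) by (auto intro!: iffD2[OF ln_le_cancel_iff])
  then show ?thesis
    unfolding traj_def by (intro min.mono) auto
qed

section \<open>Minimal points and corners\<close>

definition minimal :: "real^3 \<Rightarrow> bool" where
  "minimal x \<longleftrightarrow> x \<in> Lat \<and>
     (\<forall>y\<in>Lat. norm y \<le> norm x \<and> Delta y \<le> Delta x \<longrightarrow> norm y = norm x \<and> Delta y = Delta x)"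

lemma minimal_Lat: "minimal x \<Longrightarrow> x \<in> Lat"
  by (simp add: minimal_def)

lemma exists_minimal_le:
  assumes "x \<in> Lat"
  shows "\<exists>z. minimal z \<and> norm z \<le> norm x \<and> Delta z \<le> Delta x"
proof -
  define F where "F = {y\<in>Lat. norm y \<le> norm x \<and> Delta y \<le> Delta x}"
  define z where "z = arg_min_on (\<lambda>y. norm y + Delta y) F"
  have "finite F"
    unfolding F_def by (rule finite_subset[OF _ finite_Lat_norm_le[of "norm x"]]) auto
  moreover have "F \<noteq> {}"
    using assms by (auto simp: F_def)
  ultimately have z: "z \<in> F" "\<forall>y\<in>F. norm z + Delta z \<le> norm y + Delta y"
    unfolding z_def by (auto intro: arg_min_if_finite(1) arg_min_least)
  have "norm y = norm z \<and> Delta y = Delta z"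
    if "y \<in> Lat" "norm y \<le> norm z" "Delta y \<le> Delta z" for y
  proof -
    have "y \<in> F"
      using that z(1) by (auto simp: F_def)
    with z(2) have "norm z + Delta z \<le> norm y + Delta y"
      by blast
    with that show ?thesis
      by linarith
  qed
  then have "minimal z"
    using z(1) by (simp add: minimal_def F_def)
  with z(1) show ?thesis
    by (auto simp: F_def)
qed

lemma minimal_cases:
  assumes "minimal x" "minimal y"
  shows "(norm x = norm y \<and> Delta x = Delta y) \<or> (norm x < norm y \<and> Delta y < Delta x)
    \<or> (norm y < norm x \<and> Delta x < Delta y)"
proof -
  have "norm y \<le> norm x \<and> Delta y \<le> Delta x \<longrightarrow> norm y = norm x \<and> Delta y = Delta x"
    "norm x \<le> norm y \<and> Delta x \<le> Delta y \<longrightarrow> norm x = norm y \<and> Delta x = Delta y"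
    using assms by (auto simp: minimal_def)
  then show ?thesis
    by linarith
qed

lemma
  assumes x: "minimal x" and y: "minimal y"
  shows minimal_kink_less: "kink x < kink y \<Longrightarrow> norm x < norm y \<and> Delta y < Delta x"
    and minimal_kink_eq: "kink x = kink y \<Longrightarrow> norm x = norm y \<and> Delta x = Delta y"
proof -
  have xL: "x \<in> Lat" and yL: "y \<in> Lat"
    using x y by (simp_all add: minimal_def)
  note pos = Lat_norm_pos[OF xL] Lat_norm_pos[OF yL] Delta_pos[OF xL] Delta_pos[OF yL]
  have kink_less: "kink a < kink b"
    if "norm a < norm b" "Delta b < Delta a" "0 < norm a" "0 < Delta b" for a b
  proof -
    have "ln (norm a) < ln (norm b)" "ln (Delta b) < ln (Delta a)"
      using that by (auto intro!: iffD2[OF ln_less_cancel_iff])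
    then show ?thesis
      by (simp add: kink_def)
  qed
  show "kink x < kink y \<Longrightarrow> norm x < norm y \<and> Delta y < Delta x"
    using minimal_cases[OF x y] kink_less[of y x] pos by (auto simp: kink_def)
  show "kink x = kink y \<Longrightarrow> norm x = norm y \<and> Delta x = Delta y"
    using minimal_cases[OF x y] kink_less[of y x] kink_less[of x y] pos by auto
qed

lemma P_at_kink:
  assumes "minimal x"
  shows "P (kink x) = - ln (Delta x)"
proof -
  have x: "x \<in> Lat"
    using assms by (rule minimal_Lat)
  have "P (kink x) \<ge> - ln (Delta x)"
    using traj_le_P[OF x, of "kink x"] traj_above_kink[of x "kink x"] by simp
  moreover have "\<not> P (kink x) > - ln (Delta x)"
  proof
    assume less: "P (kink x) > - ln (Delta x)"
    obtain y where y: "y \<in> Lat" "P (kink x) = traj y (kink x)"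
      using P_attained by blast
    with less have "ln (norm y) < ln (norm x)" "ln (Delta y) < ln (Delta x)"
      by (auto simp: traj_def kink_def)
    then have "norm y < norm x" "Delta y < Delta x"
      using Lat_norm_pos[OF x] Lat_norm_pos[OF y(1)] Delta_pos[OF x] Delta_pos[OF y(1)] by auto
    with assms y(1) show False
      by (force simp: minimal_def)
  qed
  ultimately show ?thesis
    by linarith
qed

lemma corner_kink_eq:
  assumes q: "q \<in> slope_change_10 P" and x: "x \<in> Lat" "P q \<le> traj x q"
  shows "kink x = q"
proof -
  obtain e where e: "e > 0" "\<forall>t\<in>{q-e..q}. P t = P q - (q - t)" "\<forall>t\<in>{q..q+e}. P t = P q"
    using q unfolding slope_change_10_def by blast
  have traj_q: "traj x q = P q"
    using x traj_le_P[of x q] by linarith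
  show ?thesis
  proof (rule ccontr)
    assume "kink x \<noteq> q"
    then consider "q < kink x" | "kink x < q"
      by linarith
    then show False
    proof cases
      case 1
      define t where "t = q + min e (kink x - q)"
      have t: "q < t" "t \<le> kink x" "t \<le> q + e"
        using e(1) 1 by (auto simp: t_def)
      have "traj x t = t - ln (norm x)" "traj x q = q - ln (norm x)"
        using t 1 by (simp_all add: traj_below_kink)
      then have "P q + (t - q) \<le> P t"
        using traj_le_P[OF x(1), of t] traj_q by linarith
      moreover have "P t = P q"
        using bspec[OF e(3), of t] t by simp
      ultimately show False
        using t by linarith
    next
      case 2
      define t where "t = q - min e (q - kink x)"
      have t: "t < q" "kink x \<le> t" "q - e \<le> t"
        using e(1) 2 by (auto simp: t_def)
      have "traj x t = traj x q"
        using t 2 by (simp add: traj_above_kink)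
      then have "P q \<le> P t"
        using traj_le_P[OF x(1), of t] traj_q by linarith
      moreover have "P t = P q - (q - t)"
        using bspec[OF e(2), of t] t by simp
      ultimately show False
        using t by linarith
    qed
  qed
qed

lemma corner_imp_minimal:
  assumes q: "q \<in> slope_change_10 P"
  shows "\<exists>x. minimal x \<and> kink x = q"
proof -
  obtain x where x: "x \<in> Lat" "P q = traj x q"
    using P_attained by blast
  have kx: "kink x = q"
    using corner_kink_eq[OF q x(1)] x(2) by simp
  have "norm y = norm x \<and> Delta y = Delta x"
    if y: "y \<in> Lat" "norm y \<le> norm x" "Delta y \<le> Delta x" for y
  proof -
    have ky: "kink y = q"
      using corner_kink_eq[OF q y(1)] traj_antimono[OF y] x(2) by simp
    have "- ln (Delta y) \<le> - ln (Delta x)"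
      using traj_le_P[OF y(1), of q] traj_above_kink[of y q] traj_above_kink[of x q] ky kx x(2) by simp
    then have "Delta x \<le> Delta y"
      using Delta_pos[OF x(1)] Delta_pos[OF y(1)] by simp
    then have "Delta y = Delta x"
      using y(3) by simp
    moreover from this have "ln (norm y) = ln (norm x)"
      using kx ky by (simp add: kink_def)
    then have "norm y = norm x"
      using Lat_norm_pos[OF x(1)] Lat_norm_pos[OF y(1)] by simp
    ultimately show ?thesis
      by simp
  qed
  with x(1) kx show ?thesis
    unfolding minimal_def by blast
qed

text \<open>Points of large norm cannot compete near \<open>q = kink x\<close>; among the finitely many others, those
  below \<open>P q\<close> stay below on \<open>[q - e, q + e]\<close> because \<open>traj\<close> is 1-Lipschitz, and those attaining
  \<open>P q\<close> agree with \<open>x\<close> in norm and \<open>Delta\<close> by minimality.\<close>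
lemma P_eq_traj_near_kink:
  assumes x: "minimal x"
  shows "\<exists>e>0. \<forall>t. \<bar>t - kink x\<bar> \<le> e \<longrightarrow> P t = traj x t"
proof -
  define q where "q = kink x"
  have xL: "x \<in> Lat"
    using x by (rule minimal_Lat)
  have traj_q: "traj x q = P q"
    using traj_above_kink[of x q] P_at_kink[OF x] by (simp add: q_def)
  define F where "F = {y\<in>Lat. norm y \<le> exp (q + 1 - P (q - 1))}"
  define H where "H = {y\<in>F. traj y q < P q}"
  have "finite H"
    unfolding H_def F_def using finite_Lat_norm_le by (rule finite_subset[rotated]) auto
  define e where "e = Min (insert 3 ((\<lambda>y. P q - traj y q) ` H)) / 3"
  have "e > 0" "e \<le> 1"
    unfolding e_def using \<open>finite H\<close> by (auto simp: H_def Min_le_iff)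
  have gap: "3 * e \<le> P q - traj y q" if "y \<in> H" for y
    unfolding e_def using \<open>finite H\<close> that by simp
  have "P t = traj x t" if t: "\<bar>t - q\<bar> \<le> e" for t
  proof -
    obtain y where y: "y \<in> Lat" "P t = traj y t"
      using P_attained by blast
    have "P (q - 1) \<le> P t"
      using P_mono t \<open>e \<le> 1\<close> by auto
    moreover have "traj y t \<le> t - ln (norm y)"
      by (simp add: traj_def)
    ultimately have "ln (norm y) \<le> q + 1 - P (q - 1)"
      using y t \<open>e \<le> 1\<close> by linarith
    then have "norm y \<le> exp (q + 1 - P (q - 1))"
      using Lat_norm_pos[OF y(1)] by (metis exp_le_cancel_iff exp_ln)
    then have "y \<in> F"
      using y(1) by (simp add: F_def)
    have "\<not> traj y q < P q"
    proof
      assume "traj y q < P q"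
      then have "3 * e \<le> P q - traj y q"
        using \<open>y \<in> F\<close> gap by (simp add: H_def)
      moreover have "traj y t \<le> traj y q + \<bar>t - q\<bar>" "traj x q - \<bar>t - q\<bar> \<le> traj x t"
        using traj_lipschitz[of y t q] traj_lipschitz[of x t q] by linarith+
      ultimately show False
        using traj_le_P[OF xL, of t] y(2) traj_q t \<open>e > 0\<close> by linarith
    qed
    then have "traj x q \<le> traj y q"
      using traj_q by simp
    then have "ln (norm y) \<le> ln (norm x)" "ln (Delta y) \<le> ln (Delta x)"
      using traj_q by (auto simp: traj_def q_def kink_def)
    then have "norm y \<le> norm x" "Delta y \<le> Delta x"
      using Lat_norm_pos Delta_pos xL y(1) by auto
    then have "norm y = norm x \<and> Delta y = Delta x"
      using x y(1) by (auto simp: minimal_def)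
    then show ?thesis
      using y(2) by (simp add: traj_def)
  qed
  with \<open>e > 0\<close> show ?thesis
    unfolding q_def by blast
qed

lemma minimal_kink_corner:
  assumes x: "minimal x"
  shows "kink x \<in> slope_change_10 P"
proof -
  obtain e where e: "e > 0" "\<And>t. \<bar>t - kink x\<bar> \<le> e \<Longrightarrow> P t = traj x t"
    using P_eq_traj_near_kink[OF x] by blast
  have "P t = P (kink x) - (kink x - t)" if "t \<in> {kink x - e..kink x}" for t
    using that e(2)[of t] e(2)[of "kink x"] traj_below_kink[of t x] traj_below_kink[of "kink x" x]
    by simp
  moreover have "P t = P (kink x)" if "t \<in> {kink x..kink x + e}" for t
    using that e(2)[of t] e(2)[of "kink x"] traj_above_kink[of x t] traj_above_kink[of x "kink x"]
    by simp
  ultimately show ?thesis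
    unfolding slope_change_10_def using e(1) by blast
qed

lemma exists_corner_above:
  assumes "0 < q" "0 < P q"
  shows "\<exists>k\<in>slope_change_10 P. P q \<le> k \<and> P q / q \<le> P k / k"
proof -
  obtain x where x: "x \<in> Lat" "P q = traj x q"
    using P_attained by blast
  obtain z where z: "minimal z" "norm z \<le> norm x" "Delta z \<le> Delta x"
    using exists_minimal_le[OF x(1)] by blast
  have zL: "z \<in> Lat"
    using z(1) by (rule minimal_Lat)
  have traj_z: "traj z q = P q"
    using traj_antimono[OF zL z(2,3), of q] x traj_le_P[OF zL, of q] by linarith
  define k where "k = kink z"
  have P_k: "P k = - ln (Delta z)"
    using P_at_kink[OF z(1)] by (simp add: k_def)
  have "P q \<le> k \<and> P q / q \<le> P k / k"
  proof (cases "q \<le> k")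
    case True
    have "0 \<le> ln (norm z)"
      using Lat_norm_ge1[OF zL] by simp
    with True have "q * ln (norm z) \<le> k * ln (norm z)"
      by (rule mult_right_mono)
    moreover have P_eqs: "P q = q - ln (norm z)" "P k = k - ln (norm z)"
      using traj_below_kink[of q z] True traj_z P_k by (simp_all add: k_def kink_def)
    ultimately have "P q * k \<le> P k * q" "P q \<le> q"
      unfolding P_eqs using \<open>0 \<le> ln (norm z)\<close> by (simp_all add: algebra_simps)
    with True \<open>0 < q\<close> show ?thesis
      by (simp add: field_simps)
  next
    case False
    then have "P k = P q"
      using traj_above_kink[of z q] traj_z P_k by (simp add: k_def)
    moreover from this have "P q \<le> k"
      using P_le[of k] by simp
    ultimately show ?thesis
      using False \<open>0 < P q\<close> by (simp add: divide_left_mono)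
  qed
  then show ?thesis
    using minimal_kink_corner[OF z(1)] by (auto simp: k_def)
qed

lemma corners_locally_finite: "finite {s\<in>slope_change_10 P. s \<le> b}"
proof -
  define c0 where "c0 = - ln (Delta (axis 1 1))"
  define R where "R = exp (max 0 (b - c0))"
  have "{s\<in>slope_change_10 P. s \<le> b} \<subseteq> kink ` {y\<in>Lat. norm y \<le> R}"
  proof
    fix s assume s: "s \<in> {s\<in>slope_change_10 P. s \<le> b}"
    then obtain x where x: "minimal x" "kink x = s"
      using corner_imp_minimal by blast
    have xL: "x \<in> Lat"
      using x(1) by (rule minimal_Lat)
    have "ln (norm x) = s - P s"
      using P_at_kink[OF x(1)] x(2) by (simp add: kink_def)
    moreover have "min s c0 \<le> P s"
      using traj_le_P[OF axis_in_Lat, of s] by (simp add: traj_def c0_def)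
    ultimately have "ln (norm x) \<le> max 0 (b - c0)"
      using s by (auto simp: min_def split: if_splits)
    then have "norm x \<le> R"
      unfolding R_def using Lat_norm_pos[OF xL] by (metis exp_le_cancel_iff exp_ln)
    with xL x(2) show "s \<in> kink ` {y\<in>Lat. norm y \<le> R}"
      by auto
  qed
  then show ?thesis
    using finite_Lat_norm_le by (rule finite_subset[OF _ finite_imageI])
qed

lemma minimal_wedge:
  assumes x: "x \<in> Lat" and y: "y \<in> Lat" and less: "norm x < norm y" "Delta y < Delta x"
  shows "1/2 \<le> norm y * Delta x"
proof -
  have "cross3 x y \<noteq> 0"
  proof
    assume "cross3 x y = 0"
    then have "collinear {0, x, y}"
      by (simp add: cross_eq_0)
    moreover have "x \<noteq> 0" "y \<noteq> 0"
      using x y by (auto simp: Lat_def)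
    ultimately obtain c where c: "y = c *\<^sub>R x"
      using collinear_lemma by blast
    then have "\<bar>c\<bar> * norm x = norm y" "\<bar>c\<bar> * Delta x = Delta y"
      by (simp_all add: Delta_def cross_mult_left)
    with less Delta_pos[OF x] Lat_norm_pos[OF x] show False
      by (smt (verit) mult_le_cancel_right1 mult_less_cancel_right1)
  qed
  then have "1 \<le> norm (cross3 x y)"
    using x y by (auto simp: Lat_def intro: int_point_norm_ge1 int_point_cross3)
  also have "\<dots> \<le> norm u * norm (cross3 x y)"
    using norm_u_ge1 by (simp add: mult_le_cancel_right1)
  also have "\<dots> \<le> norm x * Delta y + norm y * Delta x"
    using norm_cross3_le_via_direction[of u x y] by (simp add: Delta_def)
  also have "\<dots> \<le> 2 * (norm y * Delta x)"
    using mult_mono[of "norm x" "norm y" "Delta y" "Delta x"] less Delta_pos[OF y] by simp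
  finally show ?thesis
    by simp
qed

end

section \<open>Corners above slope \<open>alpha\<close> and the uniform exponent\<close>

locale alpha_setting = irrational_direction +
  fixes alpha :: real
  assumes alpha_nonneg: "0 \<le> alpha"
    and alpha_less_Limsup: "ereal alpha < Limsup at_top (\<lambda>q. ereal (P q / q))"
begin

definition corners :: "real set" where
  "corners = {q \<in> slope_change_10 P. P q / q \<ge> alpha}"

definition mu :: real where
  "mu = alpha / (1 - alpha)"

abbreviation qa :: "nat \<Rightarrow> real" where
  "qa \<equiv> q_alpha P alpha"

lemma Limsup_ratio_le_1: "Limsup at_top (\<lambda>q. ereal (P q / q)) \<le> 1"
proof (rule Limsup_bounded)
  show "\<forall>\<^sub>F q in at_top. ereal (P q / q) \<le> 1"
    unfolding eventually_at_top_linorder using P_le by (auto intro!: exI[of _ 1] simp: divide_le_eq)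
qed

lemma alpha_less_1: "alpha < 1"
proof -
  have "ereal alpha < 1"
    using alpha_less_Limsup Limsup_ratio_le_1 by (rule less_le_trans)
  then show ?thesis
    by (simp add: one_ereal_def)
qed

lemma mu_nonneg: "0 \<le> mu"
  using alpha_nonneg alpha_less_1 by (simp add: mu_def)

lemma exists_ratio_above: "\<exists>\<beta>>0. alpha < \<beta> \<and> (\<forall>B. \<exists>q>B. \<beta> < P q / q)"
proof -
  obtain b where b: "ereal alpha < b" "b < Limsup at_top (\<lambda>q. ereal (P q / q))"
    using dense[OF alpha_less_Limsup] by blast
  have "b < 1"
    using b(2) Limsup_ratio_le_1 by (rule less_le_trans)
  then obtain \<beta> where \<beta>: "b = ereal \<beta>"
    using b(1) by (cases b) auto
  have not_ev: "\<not> (\<forall>\<^sub>F q in at_top. ereal (P q / q) \<le> b)"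
  proof
    assume "\<forall>\<^sub>F q in at_top. ereal (P q / q) \<le> b"
    then have "Limsup at_top (\<lambda>q. ereal (P q / q)) \<le> b"
      by (rule Limsup_bounded)
    with b(2) show False
      by simp
  qed
  have "\<exists>q>B. \<beta> < P q / q" for B
  proof -
    obtain q where "q \<ge> B + 1" "\<not> ereal (P q / q) \<le> b"
      using not_ev unfolding eventually_at_top_linorder by blast
    then show ?thesis
      by (intro exI[of _ q]) (auto simp: \<beta>)
  qed
  moreover have "alpha < \<beta>"
    using b(1) \<beta> by simp
  ultimately show ?thesis
    using alpha_nonneg by (intro exI[of _ \<beta>]) auto
qed

lemma minimal_in_corners_iff:
  assumes z: "minimal z" and k: "kink z > 0"
  shows "kink z \<in> corners \<longleftrightarrow> Delta z \<le> norm z powr (- mu)"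
proof -
  define a where "a = - ln (Delta z)"
  define b where "b = ln (norm z)"
  have P_k: "P (kink z) = a"
    using P_at_kink[OF z] by (simp add: a_def)
  have "kink z = b + a"
    by (simp add: kink_def a_def b_def)
  then have "alpha \<le> P (kink z) / kink z \<longleftrightarrow> alpha * (b + a) \<le> a"
    unfolding P_k using k by (simp add: le_divide_eq)
  also have "\<dots> \<longleftrightarrow> mu * b \<le> a"
    using alpha_less_1 by (simp add: mu_def field_simps)
  also have "\<dots> \<longleftrightarrow> ln (Delta z) \<le> - mu * ln (norm z)"
    unfolding a_def b_def by linarith
  also have "\<dots> \<longleftrightarrow> Delta z \<le> norm z powr (- mu)"
    using Delta_pos[OF minimal_Lat[OF z]] Lat_norm_pos[OF minimal_Lat[OF z]]
    by (simp add: powr_def ln_ge_iff[symmetric] flip: ln_le_cancel_iff)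
  finally show ?thesis
    using minimal_kink_corner[OF z] by (simp add: corners_def)
qed

lemma corners_unbounded: "\<exists>s\<in>corners. s > B"
proof -
  obtain \<beta> where \<beta>: "\<beta> > 0" "alpha < \<beta>" "\<And>B. \<exists>q>B. \<beta> < P q / q"
    using exists_ratio_above by blast
  obtain q where q: "q > max (B / \<beta>) 0" "\<beta> < P q / q"
    using \<beta>(3) by blast
  then have "0 < q" "\<beta> * q < P q"
    by (simp_all add: field_simps)
  moreover have "B < \<beta> * q"
    using q(1) \<beta>(1) by (simp add: field_simps)
  moreover have "0 < \<beta> * q"
    using \<beta>(1) \<open>0 < q\<close> by simp
  ultimately obtain k where k: "k \<in> slope_change_10 P" "P q \<le> k" "P q / q \<le> P k / k"
    using exists_corner_above[of q] by force
  then have "k \<in> corners"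
    using q(2) \<beta>(2) by (simp add: corners_def)
  with k(2) \<open>\<beta> * q < P q\<close> \<open>B < \<beta> * q\<close> show ?thesis
    by (intro bexI[of _ k]) auto
qed

lemma
  shows qa_in_corners: "qa i \<in> corners"
    and qa_less: "qa i < qa (Suc i)"
    and qa_surj: "s \<in> corners \<Longrightarrow> \<exists>i. qa i = s"
proof -
  have lf: "finite {s\<in>corners. s \<le> b}" for b
    by (rule finite_subset[OF _ corners_locally_finite[of b]]) (auto simp: corners_def)
  have "qa = enum_real corners"
    by (simp add: q_alpha_def corners_def)
  then show "qa i \<in> corners" "qa i < qa (Suc i)" "s \<in> corners \<Longrightarrow> \<exists>i. qa i = s"
    using enum_real_mem enum_real_less enum_real_surj corners_unbounded lf by auto
qed

lemma qa_strict_mono: "strict_mono qa"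
  using qa_less by (simp add: strict_mono_Suc_iff)

definition corner_pt :: "nat \<Rightarrow> real^3" where
  "corner_pt i = (SOME x. minimal x \<and> kink x = qa i)"

lemma corner_pt: "minimal (corner_pt i)" "kink (corner_pt i) = qa i"
proof -
  have "\<exists>x. minimal x \<and> kink x = qa i"
    using corner_imp_minimal qa_in_corners by (auto simp: corners_def)
  then show "minimal (corner_pt i)" "kink (corner_pt i) = qa i"
    unfolding corner_pt_def by (metis (mono_tags, lifting) someI_ex)+
qed

lemma corner_pt_Lat: "corner_pt i \<in> Lat"
  using corner_pt(1) by (rule minimal_Lat)

definition Nx :: "nat \<Rightarrow> real" where
  "Nx i = norm (corner_pt i)"

definition Dx :: "nat \<Rightarrow> real" where
  "Dx i = Delta (corner_pt i)"

lemma Nx_ge1: "1 \<le> Nx i"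
  using Lat_norm_ge1[OF corner_pt_Lat] by (simp add: Nx_def)

lemma Dx_pos: "0 < Dx i"
  using Delta_pos[OF corner_pt_Lat] by (simp add: Dx_def)

lemma Nx_Dx_strict_mono: "i < j \<Longrightarrow> Nx i < Nx j \<and> Dx j < Dx i"
  using minimal_kink_less[OF corner_pt(1) corner_pt(1)] corner_pt(2) qa_strict_mono
  by (auto simp: Nx_def Dx_def strict_mono_def)

lemma Nx_Dx_mono: "i \<le> j \<Longrightarrow> Nx i \<le> Nx j \<and> Dx j \<le> Dx i"
  using Nx_Dx_strict_mono[of i j] by (cases "i = j") auto

lemma P_qa: "P (qa i) = - ln (Dx i)"
  using P_at_kink[OF corner_pt(1)] corner_pt(2) by (simp add: Dx_def)

lemma qa_minus_P_qa: "qa i - P (qa i) = ln (Nx i)"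
  using corner_pt(2)[of i] P_qa[of i] by (simp add: kink_def Nx_def Dx_def)

lemma Nx_unbounded: "\<exists>j. X < Nx j"
proof (rule ccontr)
  assume "\<nexists>j. X < Nx j"
  then have "range corner_pt \<subseteq> {y\<in>Lat. norm y \<le> X}"
    using corner_pt_Lat by (auto simp: Nx_def not_less)
  then have "finite (range corner_pt)"
    using finite_Lat_norm_le finite_subset by blast
  moreover have "inj corner_pt"
    by (rule injI) (metis Nx_def Nx_Dx_strict_mono less_irrefl nat_neq_iff)
  ultimately show False
    using finite_imageD by (metis infinite_UNIV_nat)
qed

lemma Dx_le_Nx_powr: "0 < qa i \<Longrightarrow> Dx i \<le> Nx i powr (- mu)"
  using minimal_in_corners_iff[OF corner_pt(1)] corner_pt(2) qa_in_corners by (simp add: Nx_def Dx_def)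

lemma Dx_le1:
  assumes "0 < qa i"
  shows "Dx i \<le> 1"
proof -
  have "Nx i powr (- mu) \<le> Nx i powr 0"
    using mu_nonneg Nx_ge1[of i] by (intro powr_mono) auto
  with Dx_le_Nx_powr[OF assms] Nx_ge1[of i] show ?thesis
    by simp
qed

text \<open>Up to norm \<open>Nx (Suc i)\<close>, no point satisfying the \<open>\<mu>\<close>-condition beats \<open>corner_pt i\<close>: a minimal
  point below it would have its kink in \<open>corners\<close> strictly between \<open>qa i\<close> and \<open>qa (Suc i)\<close>.\<close>
lemma Dx_le_Delta:
  assumes i: "0 < qa i" and x: "x \<in> Lat" "Delta x \<le> norm x powr (- mu)" "norm x < Nx (Suc i)"
  shows "Dx i \<le> Delta x"
proof (rule ccontr)
  assume "\<not> Dx i \<le> Delta x"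
  then have less: "Delta x < Dx i"
    by simp
  obtain z where z: "minimal z" "norm z \<le> norm x" "Delta z \<le> Delta x"
    using exists_minimal_le[OF x(1)] by blast
  have zL: "z \<in> Lat"
    using z(1) by (rule minimal_Lat)
  have "Delta z < 1"
    using less z Dx_le1[OF i] by linarith
  then have "ln (Delta z) < 0"
    using Delta_pos[OF zL] by simp
  moreover have "0 \<le> ln (norm z)"
    using Lat_norm_ge1[OF zL] by simp
  ultimately have "0 < kink z"
    by (simp add: kink_def)
  have "Delta z \<le> norm z powr (- mu)"
    using z x(2) powr_mono2'[of "- mu" "norm z" "norm x"] mu_nonneg Lat_norm_pos[OF zL] by simp
  with \<open>0 < kink z\<close> have "kink z \<in> corners"
    using minimal_in_corners_iff[OF z(1)] by simp
  then obtain j where j: "qa j = kink z"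
    using qa_surj by blast
  have eq: "Nx j = norm z" "Dx j = Delta z"
    using minimal_kink_eq[OF corner_pt(1) z(1)] corner_pt(2)[of j] j by (auto simp: Nx_def Dx_def)
  have "j \<le> i"
    using Nx_Dx_mono[of "Suc i" j] eq z(2) x(3) by (metis not_less_eq_eq order.trans not_le)
  then show False
    using Nx_Dx_mono[of j i] eq z(3) less by linarith
qed

lemma Nx_Dx_wedge: "1/2 \<le> Nx (Suc i) * Dx i"
  using minimal_wedge[OF corner_pt_Lat corner_pt_Lat] Nx_Dx_strict_mono[of i "Suc i"] by (simp add: Nx_def Dx_def)

lemma eventually_tail: "\<forall>\<^sub>F i in sequentially. 0 < qa i \<and> 2 \<le> Nx i"
proof -
  obtain a where "qa a > 0"
    using corners_unbounded qa_surj by (metis order.strict_trans)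
  moreover obtain b where "2 < Nx b"
    using Nx_unbounded by blast
  moreover have "qa a \<le> qa i" "Nx b \<le> Nx i" if "max a b \<le> i" for i
    using that qa_strict_mono Nx_Dx_mono[of b i] by (simp_all add: strict_mono_less_eq)
  ultimately have "\<forall>i\<ge>max a b. 0 < qa i \<and> 2 \<le> Nx i"
    by force
  then show ?thesis
    unfolding eventually_sequentially by blast
qed

definition nu :: "nat \<Rightarrow> real" where
  "nu i = - ln (Dx i) / ln (Nx (Suc i))"

lemma Dx_eq_powr:
  assumes "1 < Nx (Suc i)"
  shows "Dx i = Nx (Suc i) powr (- nu i)"
  using assms Dx_pos[of i] by (simp add: powr_def nu_def)

lemma eventually_nu_bounds: "\<forall>\<^sub>F i in sequentially. 0 \<le> nu i \<and> nu i \<le> 2"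
  using eventually_tail
proof eventually_elim
  case (elim i)
  have N: "2 < Nx (Suc i)"
    using elim Nx_Dx_strict_mono[of i "Suc i"] by simp
  then have "ln 2 < ln (Nx (Suc i))"
    by simp
  then have pos: "0 < ln (Nx (Suc i))"
    using ln_gt_zero[of 2] by linarith
  have "0 \<le> - ln (Dx i)"
    using Dx_le1[of i] elim Dx_pos[of i] by simp
  have "0 \<le> ln (2 * Nx (Suc i) * Dx i)"
    using Nx_Dx_wedge[of i] by (intro ln_ge_zero) simp
  then have "- ln (Dx i) \<le> 2 * ln (Nx (Suc i))"
    using Dx_pos[of i] N \<open>ln 2 < ln (Nx (Suc i))\<close> by (simp add: ln_mult del: ln_less_cancel_iff)
  with pos \<open>0 \<le> - ln (Dx i)\<close> show ?case
    unfolding nu_def by (simp only: divide_le_eq divide_nonneg_pos) simp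
qed

definition admissible :: "real set" where
  "admissible = {\<nu>. \<exists>X0. \<forall>X\<ge>X0. \<exists>x. int_point x \<and> x \<noteq> 0 \<and> norm x \<le> X \<and>
      norm (cross3 u x) \<le> min (X powr (-\<nu>)) (norm x powr (-mu))}"

lemma norm_cross3_u: "norm (cross3 u x) = Delta x"
  by (metis Delta_def cross_skew norm_minus_cancel)

lemma admissible_imp_eventually_le:
  assumes "\<nu> \<in> admissible"
  shows "\<forall>\<^sub>F i in sequentially. \<nu> \<le> nu i"
proof -
  obtain X0 where X0: "\<forall>X\<ge>X0. \<exists>x. int_point x \<and> x \<noteq> 0 \<and> norm x \<le> X \<and>
      norm (cross3 u x) \<le> min (X powr (-\<nu>)) (norm x powr (-mu))"
    using assms unfolding admissible_def by blast
  obtain a where a: "X0 < Nx a"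
    using Nx_unbounded by blast
  have "X0 \<le> Nx i" if "a \<le> i" for i
    using a Nx_Dx_mono[OF that] by linarith
  then have "\<forall>\<^sub>F i in sequentially. X0 \<le> Nx i"
    unfolding eventually_sequentially by blast
  with eventually_tail show ?thesis
  proof eventually_elim
    case (elim i)
    have N: "Nx i < Nx (Suc i)" "1 < Nx (Suc i)"
      using elim Nx_Dx_strict_mono[of i "Suc i"] by simp_all
    have below: "Dx i \<le> X powr (-\<nu>)" if X: "Nx i \<le> X" "X < Nx (Suc i)" for X
    proof -
      obtain x where x: "int_point x" "x \<noteq> 0" "norm x \<le> X"
          "norm (cross3 u x) \<le> min (X powr (-\<nu>)) (norm x powr (-mu))"
        using X0 elim X(1) by (meson order.trans)
      then have "x \<in> Lat" "Delta x \<le> X powr (-\<nu>)" "Delta x \<le> norm x powr (-mu)"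
        by (simp_all add: Lat_def norm_cross3_u)
      moreover from this have "Dx i \<le> Delta x"
        using Dx_le_Delta[of i x] elim x(3) X(2) by simp
      ultimately show ?thesis
        by simp
    qed
    have "Dx i \<le> Nx (Suc i) powr (-\<nu>)"
      using le_powr_at_left_endpoint[OF _ N(1) below] Nx_ge1[of i] by simp
    with N(2) show "\<nu> \<le> nu i"
      unfolding Dx_eq_powr[OF N(2)] by simp
  qed
qed

lemma eventually_le_imp_admissible:
  assumes "\<forall>\<^sub>F i in sequentially. \<nu> \<le> nu i"
  shows "\<nu> \<in> admissible"
proof -
  obtain i1 where i1: "\<And>i. i \<ge> i1 \<Longrightarrow> \<nu> \<le> nu i \<and> 0 < qa i \<and> 2 \<le> Nx i"
    using eventually_conj[OF assms eventually_tail] unfolding eventually_sequentially by blast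
  have "\<exists>x. int_point x \<and> x \<noteq> 0 \<and> norm x \<le> X \<and>
      norm (cross3 u x) \<le> min (X powr (-\<nu>)) (norm x powr (-mu))"
    if X: "Nx i1 \<le> X" for X
  proof -
    have "mono Nx"
      by (rule monoI) (use Nx_Dx_mono in blast)
    then obtain i where i: "i \<ge> i1" "Nx i \<le> X" "X < Nx (Suc i)"
      using bracket_mono_unbounded[of Nx, OF _ Nx_unbounded X] by blast
    have N: "1 < Nx (Suc i)" "1 \<le> X"
      using i1[OF i(1)] i(2,3) by linarith+
    have "Dx i \<le> X powr (-\<nu>)"
    proof (cases "0 \<le> \<nu>")
      case True
      have "Dx i \<le> Nx (Suc i) powr (-\<nu>)"
        unfolding Dx_eq_powr[OF N(1)] using N i1[OF i(1)] by simp
      also have "\<dots> \<le> X powr (-\<nu>)"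
        using True N i(3) by (intro powr_mono2') auto
      finally show ?thesis .
    next
      case False
      then have "1 \<le> X powr (-\<nu>)"
        using N by (intro ge_one_powr_ge_zero) auto
      then show ?thesis
        using Dx_le1[of i] i1[OF i(1)] by simp
    qed
    moreover have "Dx i \<le> Nx i powr (- mu)"
      using Dx_le_Nx_powr i1[OF i(1)] by simp
    ultimately show ?thesis
      using corner_pt_Lat[of i] i(2)
      by (intro exI[of _ "corner_pt i"]) (simp add: Nx_def Dx_def Lat_def norm_cross3_u)
  qed
  then show ?thesis
    unfolding admissible_def by blast
qed

lemma kappa_eq: "kappa alpha P = ereal (nu_hat mu u / (1 + nu_hat mu u))"
proof -
  have "\<forall>\<^sub>F i in sequentially. P (qa i) / r_alpha P alpha i = nu i / (1 + nu i)"
    using eventually_tail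
  proof eventually_elim
    case (elim i)
    have "0 < ln (Nx (Suc i))"
      using elim Nx_Dx_strict_mono[of i "Suc i"] by simp
    then show ?case
      unfolding r_alpha_def using qa_minus_P_qa[of "Suc i"] P_qa[of i]
      by (simp add: nu_def field_simps)
  qed
  then have "\<forall>\<^sub>F i in sequentially.
      ereal (P (qa i) / r_alpha P alpha i) = ereal (nu i / (1 + nu i))"
    by (rule eventually_mono) simp
  then have "kappa alpha P = Liminf sequentially (\<lambda>i. ereal (nu i / (1 + nu i)))"
    unfolding kappa_def by (rule Liminf_eq)
  also have "\<dots> = ereal (Sup {v. \<forall>\<^sub>F i in sequentially. v \<le> nu i}
      / (1 + Sup {v. \<forall>\<^sub>F i in sequentially. v \<le> nu i}))"
    using eventually_nu_bounds unfolding eventually_conj_iff by (intro Liminf_frac_one_plus) blast+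
  also have "{v. \<forall>\<^sub>F i in sequentially. v \<le> nu i} = admissible"
    using admissible_imp_eventually_le eventually_le_imp_admissible by blast
  also have "Sup admissible = nu_hat mu u"
    by (simp add: nu_hat_def admissible_def)
  finally show ?thesis .
qed

end

theorem mainTheorem9:
  fixes \<xi> \<eta> \<alpha> :: real
  assumes indep: "\<And>a b c :: rat. of_rat a + of_rat b * \<xi> + of_rat c * \<eta> = 0 \<Longrightarrow> a = 0 \<and> b = 0 \<and> c = 0"
    and \<alpha>0: "0 \<le> \<alpha>"
    and \<alpha>lt: "ereal \<alpha> < Limsup at_top (\<lambda>q. ereal (- L1star (vector [1, \<xi>, \<eta>]) q / q))"
  shows "kappa \<alpha> (\<lambda>q. - L1star (vector [1, \<xi>, \<eta>]) q) =
         ereal (nu_hat (\<alpha> / (1 - \<alpha>)) (vector [1, \<xi>, \<eta>]) /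
                (1 + nu_hat (\<alpha> / (1 - \<alpha>)) (vector [1, \<xi>, \<eta>])))"
proof -
  have "\<xi> \<notin> \<rat>"
  proof
    assume "\<xi> \<in> \<rat>"
    then obtain r where "\<xi> = of_rat r"
      by (auto elim: Rats_cases)
    then show False
      using indep[of "- r" 1 0] by (simp add: of_rat_minus)
  qed
  then interpret irrational_direction \<xi> \<eta>
    by unfold_locales
  have P_eq: "P = (\<lambda>q. - L1star (vector [1, \<xi>, \<eta>]) q)"
    by (simp add: fun_eq_iff P_def u_def)
  interpret alpha_setting \<xi> \<eta> \<alpha>
    by unfold_locales (use \<alpha>0 \<alpha>lt in \<open>simp_all add: P_eq\<close>)
  show ?thesis
    using kappa_eq by (simp add: P_eq mu_def u_def)
qed

end
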